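(* Consider an arbitrary sequence of instances $\{\mathcal{I}_N\}$ of the non-binary voting game and an arbitrary sequence of strategy profiles $\{\Sigma_N\}_{N\ge1}$, and let $f^N$ be the excess expected vote share of $\Sigma_N$. (i) If $\liminf_{N\to\infty}\sqrt N f^N=+\infty$, then $\lim_{N\to\infty}A(\Sigma_N)=1$. (ii) If there exist a constant $\eta<0$ and an infinite set $\mathcal{N}\subseteq\mathbb{N}$ such that $\sqrt N f^N\le\eta$ for all $N\in\mathcal{N}$, then there exist constants $N_\eta>0$ and $c>0$ such that $A(\Sigma_N)\le1-c$ for all $N\in\mathcal{N}$ with $N>N_\eta$. (iii) If there exist a constant $\eta\ge0$ and an infinite set $\mathcal{N}\subseteq\mathbb{N}$ such that $\sqrt N f^N\le\eta$ for all $N\in\mathcal{N}$, and a constant $\psi>0$ such that $\mathrm{Var}(\sum_{n=1}^NX_n^N\mid W=w)\ge\psi N$ for all $N\in\mathcal{N}$ and all states $w$, then there exist constants $N_\eta>0$ and $c>0$ such that $A(\Sigma_N)\le1-c$ for all $N\in\mathcal{N}$ with $N>N_\eta$.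
   Context: Non-binary voting game. $N$ agents each vote for $\mathbf{A}$ or $\mathbf{R}$. World state $W\in\{1,\dots,\mathcal{W}\}$ (unobserved), prior $P_w>0$. Conditional on $W$, each agent independently receives a signal $S_n\in\{1,\dots,M\}$ with $P_{mw}=\Pr[S_n=m\mid W=w]$, satisfying stochastic dominance. Threshold $\mu\in(0,1)$: $\mathbf{A}$ wins iff at least $\mu N$ agents vote $\mathbf{A}$, else $\mathbf{R}$. Agents have utilities $v_n$ on states $\times\{\mathbf{A},\mathbf{R}\}$ with values in $\{0,\dots,B\}$, $v_n(w,\mathbf{A})$ strictly increasing, $v_n(w,\mathbf{R})$ strictly decreasing in $w$. Constants $\alpha^{\mathbf{A}}_w$, $\alpha^{\mathbf{R}}_w=1-\alpha^{\mathbf{A}}_w$ independent of $N$: exactly $\lfloor\alpha^{\mathbf{R}}_wN\rfloor$ agents prefer $\mathbf{R}$ in state $w$; $\alpha^{\mathbf{A}}_w\ne\mu$. Informed majority decision in $w$: $\mathbf{A}$ if $\alpha^{\mathbf{A}}_w>\mu$, else $\mathbf{R}$. $\mathcal{L}=\{w:\alpha^{\mathbf{A}}_w<\mu\}$, $\mathcal{H}=\{w:\alpha^{\mathbf{A}}_w>\mu\}$, both nonempty. A sequence of instances: $\mathcal{I}_N$ has $N$ agents, all share $\mu$, $(P_w)$, $(P_{mw})$, $(\alpha^{\mathbf{A}}_w)$; utilities arbitrary. Strategy $(\beta_1,\dots,\beta_M)$: probability of voting $\mathbf{A}$ on each signal. $\lambda^{\mathbf{X}}_w(\Sigma)$: ex-ante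 probability that $\mathbf{X}$ wins in state $w$. Fidelity $A(\Sigma)=\sum_{w\in\mathcal{L}}P_w\lambda^{\mathbf{R}}_w(\Sigma)+\sum_{w\in\mathcal{H}}P_w\lambda^{\mathbf{A}}_w(\Sigma)$. For $\Sigma_N$, $X_n^N=1$ if agent $n$ votes $\mathbf{A}$, $0$ otherwise; $f^N_{w\mathbf{A}}=\frac1N\sum_nE[X_n^N\mid W=w]-\mu$, $f^N_{w\mathbf{R}}=\frac1N\sum_nE[1-X_n^N\mid W=w]-(1-\mu)$, and $f^N=\min\big(\min_{w\in\mathcal{H}}f^N_{w\mathbf{A}},\min_{w\in\mathcal{L}}f^N_{w\mathbf{R}}\big)$. *)

theory Defs
  imports "HOL-Probability.Probability"
begin

text \<open>States are 1..K, signals are 1..M, agents of instance N are 1..N.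
  sig w : distribution of a signal given W = w (so pmf (sig w) m = P_{mw}).
  b n m : probability that agent n votes A upon signal m (strategy profile).
  A vote profile is a function x :: nat => bool (x n = True iff agent n votes A).\<close>

definition stoch_dom :: "nat \<Rightarrow> (nat \<Rightarrow> nat pmf) \<Rightarrow> bool" where
  "stoch_dom K sig \<longleftrightarrow>
     (\<forall>w\<in>{1..K}. \<forall>w'\<in>{1..K}. \<forall>k. w \<le> w' \<longrightarrow>
        measure_pmf.prob (sig w) {m. k \<le> m} \<le> measure_pmf.prob (sig w') {m. k \<le> m})"

definition votes :: "(nat \<Rightarrow> nat pmf) \<Rightarrow> (nat \<Rightarrow> nat \<Rightarrow> real) \<Rightarrow> nat \<Rightarrow> nat \<Rightarrow> (nat \<Rightarrow> bool) pmf" where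
  "votes sig b N w = Pi_pmf {1..N} False (\<lambda>n. sig w \<bind> (\<lambda>m. bernoulli_pmf (b n m)))"

definition numA :: "nat \<Rightarrow> (nat \<Rightarrow> bool) \<Rightarrow> nat" where
  "numA N x = card {n\<in>{1..N}. x n}"

definition lamA :: "(nat \<Rightarrow> nat pmf) \<Rightarrow> (nat \<Rightarrow> nat \<Rightarrow> real) \<Rightarrow> real \<Rightarrow> nat \<Rightarrow> nat \<Rightarrow> real" where
  "lamA sig b mu N w = measure_pmf.prob (votes sig b N w) {x. mu * real N \<le> real (numA N x)}"

definition lamR :: "(nat \<Rightarrow> nat pmf) \<Rightarrow> (nat \<Rightarrow> nat \<Rightarrow> real) \<Rightarrow> real \<Rightarrow> nat \<Rightarrow> nat \<Rightarrow> real" where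
  "lamR sig b mu N w = measure_pmf.prob (votes sig b N w) {x. \<not> (mu * real N \<le> real (numA N x))}"

definition Lset :: "nat \<Rightarrow> (nat \<Rightarrow> real) \<Rightarrow> real \<Rightarrow> nat set" where
  "Lset K alphaA mu = {w\<in>{1..K}. alphaA w < mu}"

definition Hset :: "nat \<Rightarrow> (nat \<Rightarrow> real) \<Rightarrow> real \<Rightarrow> nat set" where
  "Hset K alphaA mu = {w\<in>{1..K}. alphaA w > mu}"

definition fidelity :: "nat pmf \<Rightarrow> (nat \<Rightarrow> nat pmf) \<Rightarrow> (nat \<Rightarrow> nat \<Rightarrow> real) \<Rightarrow> real \<Rightarrow> (nat \<Rightarrow> real) \<Rightarrow> nat \<Rightarrow> nat \<Rightarrow> real" where
  "fidelity prior sig b mu alphaA K N =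
     (\<Sum>w\<in>Lset K alphaA mu. pmf prior w * lamR sig b mu N w) +
     (\<Sum>w\<in>Hset K alphaA mu. pmf prior w * lamA sig b mu N w)"

definition fA :: "(nat \<Rightarrow> nat pmf) \<Rightarrow> (nat \<Rightarrow> nat \<Rightarrow> real) \<Rightarrow> real \<Rightarrow> nat \<Rightarrow> nat \<Rightarrow> real" where
  "fA sig b mu N w =
     (1 / real N) * (\<Sum>n\<in>{1..N}. measure_pmf.expectation (votes sig b N w) (\<lambda>x. if x n then 1 else 0)) - mu"

definition fR :: "(nat \<Rightarrow> nat pmf) \<Rightarrow> (nat \<Rightarrow> nat \<Rightarrow> real) \<Rightarrow> real \<Rightarrow> nat \<Rightarrow> nat \<Rightarrow> real" where
  "fR sig b mu N w =
     (1 / real N) * (\<Sum>n\<in>{1..N}. measure_pmf.expectation (votes sig b N w) (\<lambda>x. 1 - (if x n then 1 else 0))) - (1 - mu)"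

definition excess :: "(nat \<Rightarrow> nat pmf) \<Rightarrow> (nat \<Rightarrow> nat \<Rightarrow> real) \<Rightarrow> real \<Rightarrow> (nat \<Rightarrow> real) \<Rightarrow> nat \<Rightarrow> nat \<Rightarrow> real" where
  "excess sig b mu alphaA K N =
     min (Min ((\<lambda>w. fA sig b mu N w) ` Hset K alphaA mu))
         (Min ((\<lambda>w. fR sig b mu N w) ` Lset K alphaA mu))"

definition vote_var :: "(nat \<Rightarrow> nat pmf) \<Rightarrow> (nat \<Rightarrow> nat \<Rightarrow> real) \<Rightarrow> nat \<Rightarrow> nat \<Rightarrow> real" where
  "vote_var sig b N w = measure_pmf.variance (votes sig b N w) (\<lambda>x. real (numA N x))"

end

(*
  Conditionally on the state w the votes are independent coin flips, so the number S of A-votes is a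
  sum of independent Bernoulli variables, and A(Sigma) is one minus the prior-weighted probability that
  the wrong outcome wins.  N f^N is the smallest distance, over the states, from E S to the threshold
  mu N, counted in votes and oriented towards the correct outcome.  Parts (i) and (ii) follow from
  Hoeffding's inequality for S: if sqrt N f^N tends to infinity, E S lies many standard deviations on
  the correct side in every state; if sqrt N f^N <= eta < 0, it lies |eta| sqrt N votes on the wrong side
  in some state.  In (iii) the mean may lie O(sqrt N) votes on the correct side, so anticoncentration is
  needed: for a centred sum Z of independent summands bounded by 1 with variance V, the moment
  generating function satisfies exp (l^2 V / 8) <= E exp (l Z) <= exp (l^2 V) for |l| <= 1/2, and the
  Paley-Zygmund inequality for exp (l Z) with l of order 1 / sqrt V gives P (Z >= k sqrt V) >= c(k) > 0.
*)

theory Submission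
  imports Defs
begin

section \<open>Moment inequalities\<close>

lemma exp_quadratic_approx:
  fixes x :: real
  assumes "\<bar>x\<bar> \<le> 1"
  shows "\<bar>exp x - (1 + x + x\<^sup>2 / 2)\<bar> \<le> \<bar>x\<bar> ^ 3 / 2"
proof -
  obtain t where t: "\<bar>t\<bar> \<le> \<bar>x\<bar>" "exp x = (\<Sum>m<3. x ^ m / fact m) + exp t / fact 3 * x ^ 3"
    using Maclaurin_exp_le by blast
  have "exp t \<le> exp 1"
    using t(1) assms by simp
  then have "exp t \<le> 3"
    using exp_le by linarith
  have "\<bar>exp x - (1 + x + x\<^sup>2 / 2)\<bar> = exp t / 6 * \<bar>x\<bar> ^ 3"
    using t(2) by (simp add: eval_nat_numeral fact_numeral power2_eq_square abs_mult power_abs)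
  also have "\<dots> \<le> 3 / 6 * \<bar>x\<bar> ^ 3"
    using \<open>exp t \<le> 3\<close> by (intro mult_right_mono) auto
  finally show ?thesis by simp
qed

lemma exp_le_quadratic:
  fixes x :: real
  assumes "\<bar>x\<bar> \<le> 1"
  shows "exp x \<le> 1 + x + x\<^sup>2"
proof -
  have "\<bar>x\<bar> ^ 3 \<le> x\<^sup>2"
    using mult_right_mono[OF assms, of "x\<^sup>2"] by (simp add: power3_eq_cube power2_eq_square abs_mult_self_eq)
  then show ?thesis
    using exp_quadratic_approx[OF assms] by linarith
qed

lemma exp_ge_quadratic:
  fixes x :: real
  assumes "\<bar>x\<bar> \<le> 1/2"
  shows "1 + x + x\<^sup>2 / 4 \<le> exp x"
proof -
  have "\<bar>x\<bar> ^ 3 \<le> x\<^sup>2 / 2"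
    using mult_right_mono[OF assms, of "x\<^sup>2"] by (simp add: power3_eq_cube power2_eq_square abs_mult_self_eq)
  then show ?thesis
    using exp_quadratic_approx[of x] assms by linarith
qed

context
  fixes q :: "'a pmf" and g :: "'a \<Rightarrow> real"
  assumes finite_support: "finite (set_pmf q)"
    and centered: "measure_pmf.expectation q g = 0"
begin

private lemma integrable_q: "integrable q (f :: 'a \<Rightarrow> real)"
  by (rule integrable_measure_pmf_finite[OF finite_support])

lemma centered_mgf_ge_1: "1 \<le> measure_pmf.expectation q (\<lambda>a. exp (t * g a))"
proof -
  have "1 = measure_pmf.expectation q (\<lambda>a. 1 + t * g a)"
    using centered by (simp add: integrable_q)
  also have "\<dots> \<le> measure_pmf.expectation q (\<lambda>a. exp (t * g a))"
    by (intro integral_mono integrable_q exp_ge_add_one_self)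
  finally show ?thesis .
qed

lemma centered_mgf_le:
  assumes "\<And>a. \<bar>g a\<bar> \<le> 1" "\<bar>t\<bar> \<le> 1"
  shows "measure_pmf.expectation q (\<lambda>a. exp (t * g a)) \<le> exp (t\<^sup>2 * measure_pmf.expectation q (\<lambda>a. (g a)\<^sup>2))"
proof -
  have "measure_pmf.expectation q (\<lambda>a. exp (t * g a)) \<le> measure_pmf.expectation q (\<lambda>a. 1 + t * g a + (t * g a)\<^sup>2)"
    using assms by (intro integral_mono integrable_q exp_le_quadratic) (auto simp: abs_mult mult_le_one)
  also have "\<dots> = 1 + t\<^sup>2 * measure_pmf.expectation q (\<lambda>a. (g a)\<^sup>2)"
    using centered by (simp add: integrable_q power_mult_distrib)
  also have "\<dots> \<le> exp (t\<^sup>2 * measure_pmf.expectation q (\<lambda>a. (g a)\<^sup>2))"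
    by (rule exp_ge_add_one_self)
  finally show ?thesis .
qed

lemma centered_mgf_ge:
  assumes "\<And>a. \<bar>g a\<bar> \<le> 1" "\<bar>t\<bar> \<le> 1/2"
  shows "exp (t\<^sup>2 * measure_pmf.expectation q (\<lambda>a. (g a)\<^sup>2) / 8) \<le> measure_pmf.expectation q (\<lambda>a. exp (t * g a))"
proof -
  define v where "v = measure_pmf.expectation q (\<lambda>a. (g a)\<^sup>2)"
  define y where "y = t\<^sup>2 * v / 4"
  have "0 \<le> v" "v \<le> 1"
    unfolding v_def using assms(1)
    by (auto intro!: integral_nonneg_AE measure_pmf.integral_le_const integrable_q simp: abs_square_le_1)
  moreover have "t\<^sup>2 \<le> 1"
    using assms(2) by (simp add: abs_square_le_1)
  ultimately have y: "0 \<le> y" "y \<le> 1"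
    unfolding y_def using mult_le_one[of "t\<^sup>2" v] by auto
  have "exp (t\<^sup>2 * measure_pmf.expectation q (\<lambda>a. (g a)\<^sup>2) / 8) = exp (y / 2)"
    by (simp add: y_def v_def)
  also have "\<dots> \<le> 1 + y / 2 + (y / 2)\<^sup>2"
    using y by (intro exp_bound) auto
  also have "\<dots> \<le> 1 + y"
    using y mult_left_mono[of y 1 y] by (simp add: power2_eq_square)
  also have "\<dots> = measure_pmf.expectation q (\<lambda>a. 1 + t * g a + (t * g a)\<^sup>2 / 4)"
    using centered by (simp add: y_def v_def integrable_q power_mult_distrib)
  also have "\<dots> \<le> measure_pmf.expectation q (\<lambda>a. exp (t * g a))"
  proof (intro integral_mono integrable_q exp_ge_quadratic)
    fix a
    show "\<bar>t * g a\<bar> \<le> 1/2"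
      using mult_left_mono[OF assms(1) abs_ge_zero[of t], of a] assms(2) by (simp add: abs_mult)
  qed
  finally show ?thesis .
qed

end

lemma paley_zygmund:
  fixes M :: "'a pmf" and Y :: "'a \<Rightarrow> real"
  assumes integrable_Y: "integrable M Y" "integrable M (\<lambda>x. (Y x)\<^sup>2)" and nonneg: "\<And>x. 0 \<le> Y x"
  shows "(measure_pmf.expectation M Y)\<^sup>2
    \<le> 4 * measure_pmf.expectation M (\<lambda>x. (Y x)\<^sup>2) * measure_pmf.prob M {x. measure_pmf.expectation M Y / 2 < Y x}"
proof -
  define m where "m = measure_pmf.expectation M Y"
  define s where "s = measure_pmf.expectation M (\<lambda>x. (Y x)\<^sup>2)"
  define A where "A = {x. m / 2 < Y x}"
  define P where "P = measure_pmf.prob M A"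
  have "0 \<le> m" "0 \<le> s" "0 \<le> P"
    unfolding m_def s_def P_def using nonneg by (auto intro: integral_nonneg_AE)
  (* Integrate the pointwise bound Y \<le> m/2 + Y\<^sup>2/(2t) + t/2 \<cdot> 1\<^sub>A (AM-GM on A), then optimise over t. *)
  have key: "m * t \<le> s + t\<^sup>2 * P" if t: "0 < t" for t
  proof -
    have pointwise: "Y x \<le> m / 2 + (Y x)\<^sup>2 / (2 * t) + t / 2 * indicator A x" for x
    proof (cases "x \<in> A")
      case True
      have "2 * t * Y x \<le> (Y x)\<^sup>2 + t\<^sup>2"
        using sum_squares_bound[of "Y x" t] by (simp add: power2_eq_square algebra_simps)
      then show ?thesis
        using True t mult_nonneg_nonneg[OF \<open>0 \<le> m\<close>, of t] by (simp add: field_simps power2_eq_square)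
    next
      case False
      have "0 \<le> (Y x)\<^sup>2 / (2 * t)"
        using t by simp
      then show ?thesis
        using False by (simp add: A_def)
    qed
    have integrable_indicator: "integrable M (indicator A :: 'a \<Rightarrow> real)"
      by (rule integrable_real_indicator) (auto simp: measure_pmf.emeasure_finite less_top[symmetric])
    then have "integrable M (\<lambda>x. m / 2 + (Y x)\<^sup>2 / (2 * t) + t / 2 * indicator A x)"
      using integrable_Y(2) by simp
    then have "measure_pmf.expectation M Y
        \<le> measure_pmf.expectation M (\<lambda>x. m / 2 + (Y x)\<^sup>2 / (2 * t) + t / 2 * indicator A x)"
      using pointwise by (intro integral_mono integrable_Y(1))
    then have "m \<le> measure_pmf.expectation M (\<lambda>x. m / 2 + (Y x)\<^sup>2 / (2 * t) + t / 2 * indicator A x)"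
      by (simp add: m_def)
    also have "\<dots> = m / 2 + s / (2 * t) + t / 2 * P"
      using integrable_Y integrable_indicator by (simp add: Bochner_Integration.integral_add s_def P_def)
    finally show ?thesis
      using t by (simp add: field_simps power2_eq_square)
  qed
  show ?thesis
  proof (cases "m = 0")
    case False
    then have "0 < m"
      using \<open>0 \<le> m\<close> by simp
    have "0 < P"
    proof (rule ccontr)
      assume "\<not> 0 < P"
      then show False
        using key[of "(s + 1) / m"] \<open>0 < m\<close> \<open>0 \<le> s\<close> \<open>0 \<le> P\<close> by simp
    qed
    have "m * (m / (2 * P)) \<le> s + (m / (2 * P))\<^sup>2 * P"
      using \<open>0 < m\<close> \<open>0 < P\<close> by (intro key) simp
    then show ?thesis
      using \<open>0 < P\<close> by (simp add: m_def s_def P_def A_def field_simps power2_eq_square)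
  qed (use \<open>0 \<le> s\<close> \<open>0 \<le> P\<close> in \<open>simp add: m_def\<close>)
qed

section \<open>Sums of independent centred summands\<close>

lemma expectation_Pi_pmf_component:
  fixes f :: "'a \<Rightarrow> real"
  assumes "finite I" "i \<in> I"
  shows "measure_pmf.expectation (Pi_pmf I dflt q) (\<lambda>x. f (x i)) = measure_pmf.expectation (q i) f"
proof -
  have "measure_pmf.expectation (Pi_pmf I dflt q) (\<lambda>x. f (x i))
      = measure_pmf.expectation (map_pmf (\<lambda>x. x i) (Pi_pmf I dflt q)) f"
    by simp
  also have "map_pmf (\<lambda>x. x i) (Pi_pmf I dflt q) = q i"
    using assms by (simp add: Pi_pmf_component)
  finally show ?thesis .
qed

locale independent_centered_sum =
  fixes I :: "'i set" and dflt :: 'a and q :: "'i \<Rightarrow> 'a pmf" and g :: "'i \<Rightarrow> 'a \<Rightarrow> real"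
  assumes finite_I: "finite I"
    and finite_support: "\<And>i. i \<in> I \<Longrightarrow> finite (set_pmf (q i))"
    and centered: "\<And>i. i \<in> I \<Longrightarrow> measure_pmf.expectation (q i) (g i) = 0"
    and bounded: "\<And>i a. i \<in> I \<Longrightarrow> \<bar>g i a\<bar> \<le> 1"
begin

abbreviation "Q \<equiv> Pi_pmf I dflt q"
definition "Z x = (\<Sum>i\<in>I. g i (x i))"
definition "V = (\<Sum>i\<in>I. measure_pmf.expectation (q i) (\<lambda>a. (g i a)\<^sup>2))"

lemma integrable_Q: "integrable Q (f :: _ \<Rightarrow> real)"
  using finite_I finite_support
  by (intro integrable_measure_pmf_finite) (auto simp: set_Pi_pmf)

lemma mgf_Z_eq_prod:
  "measure_pmf.expectation Q (\<lambda>x. exp (t * Z x)) = (\<Prod>i\<in>I. measure_pmf.expectation (q i) (\<lambda>a. exp (t * g i a)))"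
proof -
  have "(\<lambda>x. exp (t * Z x)) = (\<lambda>x. \<Prod>i\<in>I. exp (t * g i (x i)))"
    using finite_I by (simp add: Z_def sum_distrib_left exp_sum)
  moreover have "measure_pmf.expectation (Pi_pmf I dflt q) (\<lambda>x. \<Prod>i\<in>I. exp (t * g i (x i)))
      = (\<Prod>i\<in>I. measure_pmf.expectation (q i) (\<lambda>a. exp (t * g i a)))"
    by (rule expectation_prod_Pi_pmf[OF finite_I]) (auto intro: integrable_measure_pmf_finite finite_support)
  ultimately show ?thesis
    by simp
qed

lemma mgf_Z_ge_1: "1 \<le> measure_pmf.expectation Q (\<lambda>x. exp (t * Z x))"
  unfolding mgf_Z_eq_prod
  by (intro prod_ge_1 centered_mgf_ge_1 finite_support centered)

lemma mgf_Z_le: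
  assumes "\<bar>t\<bar> \<le> 1"
  shows "measure_pmf.expectation Q (\<lambda>x. exp (t * Z x)) \<le> exp (t\<^sup>2 * V)"
proof -
  have "(\<Prod>i\<in>I. measure_pmf.expectation (q i) (\<lambda>a. exp (t * g i a)))
      \<le> (\<Prod>i\<in>I. exp (t\<^sup>2 * measure_pmf.expectation (q i) (\<lambda>a. (g i a)\<^sup>2)))"
    using assms
    by (intro prod_mono conjI integral_nonneg_AE centered_mgf_le finite_support centered bounded) auto
  also have "\<dots> = exp (t\<^sup>2 * V)"
    using finite_I by (simp add: V_def exp_sum sum_distrib_left)
  finally show ?thesis
    unfolding mgf_Z_eq_prod .
qed

lemma mgf_Z_ge:
  assumes "\<bar>t\<bar> \<le> 1/2"
  shows "exp (t\<^sup>2 * V / 8) \<le> measure_pmf.expectation Q (\<lambda>x. exp (t * Z x))"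
proof -
  have "exp (t\<^sup>2 * V / 8) = (\<Prod>i\<in>I. exp (t\<^sup>2 * measure_pmf.expectation (q i) (\<lambda>a. (g i a)\<^sup>2) / 8))"
    using finite_I by (simp add: V_def exp_sum sum_distrib_left sum_divide_distrib)
  also have "\<dots> \<le> (\<Prod>i\<in>I. measure_pmf.expectation (q i) (\<lambda>a. exp (t * g i a)))"
    using assms by (intro prod_mono conjI centered_mgf_ge finite_support centered bounded) auto
  finally show ?thesis
    unfolding mgf_Z_eq_prod .
qed

lemma expectation_Z: "measure_pmf.expectation Q Z = 0"
  unfolding Z_def by (simp add: Bochner_Integration.integral_sum integrable_Q expectation_Pi_pmf_component[OF finite_I] centered)

lemma expectation_Z_squared: "measure_pmf.expectation Q (\<lambda>x. (Z x)\<^sup>2) = V"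
proof -
  have indep: "prob_space.indep_vars Q (\<lambda>_. borel) (\<lambda>i x. g i (x i)) I"
    using finite_I
    by (intro prob_space.indep_vars_compose2[OF _ indep_vars_Pi_pmf]) (auto simp: measure_pmf.prob_space_axioms)
  have uncorrelated: "measure_pmf.expectation Q (\<lambda>x. g i (x i) * g j (x j)) = 0"
    if "i \<in> I" "j \<in> I" "i \<noteq> j" for i j
  proof -
    have "measure_pmf.expectation Q (\<lambda>x. \<Prod>k\<in>{i, j}. g k (x k)) = (\<Prod>k\<in>{i, j}. measure_pmf.expectation Q (\<lambda>x. g k (x k)))"
      using that by (intro prob_space.indep_vars_lebesgue_integral prob_space.indep_vars_subset[OF _ indep])
        (auto simp: integrable_Q measure_pmf.prob_space_axioms)
    then show ?thesis
      using that by (simp add: expectation_Pi_pmf_component[OF finite_I] centered)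
  qed
  have "measure_pmf.expectation Q (\<lambda>x. (Z x)\<^sup>2)
      = (\<Sum>i\<in>I. \<Sum>j\<in>I. measure_pmf.expectation Q (\<lambda>x. g i (x i) * g j (x j)))"
    by (simp add: Z_def power2_eq_square sum_product Bochner_Integration.integral_sum integrable_Q)
  also have "\<dots> = (\<Sum>i\<in>I. measure_pmf.expectation Q (\<lambda>x. g i (x i) * g i (x i)))"
  proof (intro sum.cong refl)
    fix i assume i: "i \<in> I"
    then have "(\<Sum>j\<in>I - {i}. measure_pmf.expectation Q (\<lambda>x. g i (x i) * g j (x j))) = 0"
      using uncorrelated by (intro sum.neutral) auto
    then show "(\<Sum>j\<in>I. measure_pmf.expectation Q (\<lambda>x. g i (x i) * g j (x j)))
        = measure_pmf.expectation Q (\<lambda>x. g i (x i) * g i (x i))"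
      using finite_I i by (simp add: sum.remove)
  qed
  also have "\<dots> = V"
    unfolding V_def power2_eq_square
    by (intro sum.cong refl) (rule expectation_Pi_pmf_component[OF finite_I])
  finally show ?thesis .
qed

lemma anticoncentration:
  assumes "0 \<le> k" and large_variance: "4 * (8 * k + 8)\<^sup>2 \<le> V"
  shows "exp (- 4 * (8 * k + 8)\<^sup>2) / 4 \<le> measure_pmf.prob Q {x. k * sqrt V \<le> Z x}"
proof -
  (* beta / 8 - 1 / beta \<ge> k for this beta; with l = beta / sqrt V, the Paley-Zygmund event
     exp (l Z) > E exp (l Z) / 2 forces l Z > beta\<^sup>2 / 8 - 1, i.e. Z > (beta / 8 - 1 / beta) sqrt V. *)
  define \<beta> where "\<beta> = 8 * k + 8"
  define l where "l = \<beta> / sqrt V"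
  have "8 \<le> \<beta>"
    using \<open>0 \<le> k\<close> by (simp add: \<beta>_def)
  then have "0 < 4 * \<beta>\<^sup>2"
    by simp
  then have "0 < V"
    using large_variance unfolding \<beta>_def[symmetric] by linarith
  have "2 * \<beta> \<le> sqrt V"
    using large_variance \<open>8 \<le> \<beta>\<close> unfolding \<beta>_def[symmetric]
    by (intro real_le_rsqrt) (simp add: power_mult_distrib)
  then have "0 < l" "l \<le> 1/2"
    using \<open>0 < V\<close> \<open>8 \<le> \<beta>\<close> by (auto simp: l_def divide_le_eq)
  have lV: "l\<^sup>2 * V = \<beta>\<^sup>2"
    using \<open>0 < V\<close> by (simp add: l_def power_divide)
  define m where "m = measure_pmf.expectation Q (\<lambda>x. exp (l * Z x))"
  define s where "s = measure_pmf.expectation Q (\<lambda>x. (exp (l * Z x))\<^sup>2)"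
  have "exp (\<beta>\<^sup>2 / 8) \<le> m" "1 \<le> m"
    using mgf_Z_ge[of l] mgf_Z_ge_1[of l] \<open>0 < l\<close> \<open>l \<le> 1/2\<close> lV by (simp_all add: m_def)
  have "(exp (l * Z x))\<^sup>2 = exp ((2 * l) * Z x)" for x
    by (simp add: power2_eq_square flip: exp_add)
  then have "s \<le> exp (4 * \<beta>\<^sup>2)"
    using mgf_Z_le[of "2 * l"] \<open>0 < l\<close> \<open>l \<le> 1/2\<close> by (simp add: s_def power_mult_distrib mult.assoc flip: lV)
  have "{x. m / 2 < exp (l * Z x)} \<subseteq> {x. k * sqrt V \<le> Z x}"
  proof safe
    fix x
    assume "m / 2 < exp (l * Z x)"
    then have "exp (\<beta>\<^sup>2 / 8) < 2 * exp (l * Z x)"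
      using \<open>exp (\<beta>\<^sup>2 / 8) \<le> m\<close> by linarith
    also have "\<dots> \<le> exp 1 * exp (l * Z x)"
      using exp_ge_add_one_self[of 1] by (intro mult_right_mono) auto
    finally have "exp (\<beta>\<^sup>2 / 8) < exp 1 * exp (l * Z x)" .
    then have "\<beta>\<^sup>2 / 8 - 1 < l * Z x"
      by (simp flip: exp_add)
    then have "(\<beta> / 8 - 1 / \<beta>) * sqrt V < Z x"
      using \<open>0 < V\<close> \<open>8 \<le> \<beta>\<close> by (simp add: l_def field_simps power2_eq_square)
    moreover have "k * sqrt V \<le> (\<beta> / 8 - 1 / \<beta>) * sqrt V"
      using \<open>8 \<le> \<beta>\<close> \<open>0 < V\<close> by (intro mult_right_mono) (simp_all add: \<beta>_def field_simps)
    ultimately show "k * sqrt V \<le> Z x"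
      by linarith
  qed
  then have "measure_pmf.prob Q {x. m / 2 < exp (l * Z x)} \<le> measure_pmf.prob Q {x. k * sqrt V \<le> Z x}"
    by (intro measure_pmf.finite_measure_mono) auto
  moreover have "1 \<le> s"
    using mgf_Z_ge_1[of "2 * l"] by (simp add: s_def power2_eq_square mult.assoc flip: exp_add)
  ultimately have "4 * s * measure_pmf.prob Q {x. m / 2 < exp (l * Z x)} \<le> 4 * s * measure_pmf.prob Q {x. k * sqrt V \<le> Z x}"
    by (intro mult_left_mono) auto
  moreover have "m\<^sup>2 \<le> 4 * s * measure_pmf.prob Q {x. m / 2 < exp (l * Z x)}"
    unfolding m_def s_def by (rule paley_zygmund) (auto intro: integrable_Q)
  ultimately have PZ: "m\<^sup>2 \<le> 4 * s * measure_pmf.prob Q {x. k * sqrt V \<le> Z x}"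
    by linarith
  have "exp (- 4 * (8 * k + 8)\<^sup>2) / 4 = 1 / (4 * exp (4 * \<beta>\<^sup>2))"
    by (simp add: \<beta>_def exp_minus inverse_eq_divide)
  also have "\<dots> \<le> m\<^sup>2 / (4 * s)"
  proof (rule frac_le)
    show "1 \<le> m\<^sup>2"
      using \<open>1 \<le> m\<close> by (simp add: one_le_power)
    show "4 * s \<le> 4 * exp (4 * \<beta>\<^sup>2)"
      using \<open>s \<le> exp (4 * \<beta>\<^sup>2)\<close> by simp
  qed (use \<open>1 \<le> s\<close> in auto)
  also have "\<dots> \<le> measure_pmf.prob Q {x. k * sqrt V \<le> Z x}"
    using PZ \<open>1 \<le> s\<close> by (simp add: divide_le_eq mult.commute)
  finally show ?thesis .
qed

end

section \<open>The number of heads of independent coins\<close>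

lemma expectation_bool_pmf:
  fixes q :: "bool pmf" and f :: "bool \<Rightarrow> real"
  shows "measure_pmf.expectation q f = pmf q True * f True + (1 - pmf q True) * f False"
  by (simp add: integral_measure_pmf_real[of UNIV] UNIV_bool pmf_False_conv_True algebra_simps)

lemma independent_centered_sum_coins:
  fixes q :: "'i \<Rightarrow> bool pmf" and s :: real
  assumes "finite I" "\<bar>s\<bar> = 1"
  shows "independent_centered_sum I q (\<lambda>i b. s * (of_bool b - pmf (q i) True))"
proof
  fix i b
  show "measure_pmf.expectation (q i) (\<lambda>b. s * (of_bool b - pmf (q i) True)) = 0"
    by (simp add: expectation_bool_pmf algebra_simps)
  show "\<bar>s * (of_bool b - pmf (q i) True)\<bar> \<le> 1"
    using pmf_le_1[of "q i" True] assms(2) by (cases b) (auto simp: abs_mult)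
qed (auto simp: assms(1))

context
  fixes I :: "'i set" and dflt :: bool and q :: "'i \<Rightarrow> bool pmf" and s :: real
  assumes finite_I: "finite I" and unit_sign: "\<bar>s\<bar> = 1"
begin

interpretation coins: independent_centered_sum I dflt q "\<lambda>i b. s * (of_bool b - pmf (q i) True)"
  by (rule independent_centered_sum_coins[OF finite_I unit_sign])

lemma coins_Z_eq: "coins.Z x = s * (real (card {i\<in>I. x i}) - (\<Sum>i\<in>I. pmf (q i) True))"
  using finite_I by (simp add: coins.Z_def sum_subtractf Collect_conj_eq flip: sum_distrib_left)

lemma coins_V_eq: "coins.V = (\<Sum>i\<in>I. pmf (q i) True * (1 - pmf (q i) True))"
proof -
  have "s\<^sup>2 = 1"
    using power2_abs[of s] unit_sign by simp
  then show ?thesis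
    unfolding coins.V_def by (intro sum.cong refl) (simp add: expectation_bool_pmf power_mult_distrib algebra_simps power2_eq_square)
qed

end

lemma variance_card_Pi_pmf:
  fixes q :: "'i \<Rightarrow> bool pmf"
  assumes "finite I"
  shows "measure_pmf.variance (Pi_pmf I dflt q) (\<lambda>x. real (card {i\<in>I. x i}))
    = (\<Sum>i\<in>I. pmf (q i) True * (1 - pmf (q i) True))"
proof -
  interpret coins: independent_centered_sum I dflt q "\<lambda>i b. of_bool b - pmf (q i) True"
    using independent_centered_sum_coins[OF assms, of 1] by simp
  have Z: "coins.Z = (\<lambda>x. real (card {i\<in>I. x i}) - (\<Sum>i\<in>I. pmf (q i) True))"
    using coins_Z_eq[OF assms, of 1] by auto
  have V: "coins.V = (\<Sum>i\<in>I. pmf (q i) True * (1 - pmf (q i) True))"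
    using coins_V_eq[OF assms, of 1] by simp
  have "measure_pmf.expectation coins.Q (\<lambda>x. real (card {i\<in>I. x i})) = (\<Sum>i\<in>I. pmf (q i) True)"
    using coins.expectation_Z unfolding Z by (simp add: coins.integrable_Q)
  then have "measure_pmf.variance coins.Q (\<lambda>x. real (card {i\<in>I. x i})) = measure_pmf.expectation coins.Q (\<lambda>x. (coins.Z x)\<^sup>2)"
    unfolding Z by simp
  also have "\<dots> = (\<Sum>i\<in>I. pmf (q i) True * (1 - pmf (q i) True))"
    by (simp add: coins.expectation_Z_squared V)
  finally show ?thesis .
qed

lemma anticoncentration_card_Pi_pmf:
  fixes I :: "'i set" and q :: "'i \<Rightarrow> bool pmf" and s :: real
  defines "v \<equiv> \<Sum>i\<in>I. pmf (q i) True * (1 - pmf (q i) True)"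
  assumes "finite I" "\<bar>s\<bar> = 1" "0 \<le> k" "4 * (8 * k + 8)\<^sup>2 \<le> v"
  shows "exp (- 4 * (8 * k + 8)\<^sup>2) / 4
    \<le> measure_pmf.prob (Pi_pmf I dflt q) {x. k * sqrt v \<le> s * (real (card {i\<in>I. x i}) - (\<Sum>i\<in>I. pmf (q i) True))}"
proof -
  interpret coins: independent_centered_sum I dflt q "\<lambda>i b. s * (of_bool b - pmf (q i) True)"
    by (rule independent_centered_sum_coins) (use assms in auto)
  show ?thesis
    using coins.anticoncentration assms coins_Z_eq[OF assms(2,3)] coins_V_eq[OF assms(2,3)]
    by simp
qed

lemma hoeffding_card_Pi_pmf:
  fixes I :: "'i set" and q :: "'i \<Rightarrow> bool pmf" and s :: real
  assumes "finite I" "I \<noteq> {}" "\<bar>s\<bar> = 1" "0 \<le> a"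
  shows "measure_pmf.prob (Pi_pmf I dflt q) {x. a \<le> s * (real (card {i\<in>I. x i}) - (\<Sum>i\<in>I. pmf (q i) True))}
    \<le> exp (- 2 * a\<^sup>2 / real (card I))"
proof -
  interpret Hoeffding_ineq "Pi_pmf I dflt q" I "\<lambda>i x. of_bool (x i)" "\<lambda>_. 0" "\<lambda>_. 1" "\<Sum>i\<in>I. pmf (q i) True"
  proof unfold_locales
    show "prob_space.indep_vars (Pi_pmf I dflt q) (\<lambda>_. borel) (\<lambda>i x. of_bool (x i)) I"
      by (intro prob_space.indep_vars_compose2[OF _ indep_vars_Pi_pmf]) (auto simp: measure_pmf.prob_space_axioms assms)
    show "(\<Sum>i\<in>I. pmf (q i) True) \<equiv> (\<Sum>i\<in>I. measure_pmf.expectation (Pi_pmf I dflt q) (\<lambda>x. of_bool (x i)))"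
      by (simp add: expectation_Pi_pmf_component[OF assms(1)] expectation_bool_pmf)
  qed (auto simp: assms)
  have count: "(\<Sum>i\<in>I. of_bool (x i)) = real (card {i\<in>I. x i})" for x
    using assms(1) by (simp add: Collect_conj_eq)
  have width: "(\<Sum>i\<in>I. ((1::real) - 0)\<^sup>2) = real (card I)"
    by simp
  have "0 < real (card I)"
    using assms(1,2) by (simp add: card_gt_0_iff)
  consider "s = 1" | "s = -1"
    using assms(3) by linarith
  then show ?thesis
  proof cases
    case 1
    then show ?thesis
      using Hoeffding_ineq_ge[of a] assms(4) \<open>0 < real (card I)\<close>
      unfolding count width by (simp add: algebra_simps)
  next
    case 2
    then show ?thesis
      using Hoeffding_ineq_le[of a] assms(4) \<open>0 < real (card I)\<close>
      unfolding count width by (simp add: algebra_simps)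
  qed
qed

section \<open>Error probabilities in the voting game\<close>

locale voting_game =
  fixes K :: nat and mu :: real and prior :: "nat pmf" and sig :: "nat \<Rightarrow> nat pmf" and alphaA :: "nat \<Rightarrow> real"
  assumes prior_support: "set_pmf prior = {1..K}"
    and alpha_ne_mu: "\<forall>w\<in>{1..K}. alphaA w \<noteq> mu"
    and L_nonempty: "Lset K alphaA mu \<noteq> {}"
    and H_nonempty: "Hset K alphaA mu \<noteq> {}"
begin

abbreviation "L \<equiv> Lset K alphaA mu"
abbreviation "H \<equiv> Hset K alphaA mu"

lemma L_union_H: "L \<union> H = {1..K}"
  using alpha_ne_mu by (auto simp: Lset_def Hset_def)

lemma L_inter_H: "L \<inter> H = {}"
  by (auto simp: Lset_def Hset_def)

lemma finite_L: "finite L" and finite_H: "finite H"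
  by (simp_all add: Lset_def Hset_def)

definition vote_pmf :: "(nat \<Rightarrow> nat \<Rightarrow> real) \<Rightarrow> nat \<Rightarrow> nat \<Rightarrow> bool pmf" where
  "vote_pmf b w n = sig w \<bind> (\<lambda>m. bernoulli_pmf (b n m))"

definition mean_numA :: "(nat \<Rightarrow> nat \<Rightarrow> real) \<Rightarrow> nat \<Rightarrow> nat \<Rightarrow> real" where
  "mean_numA b N w = (\<Sum>n\<in>{1..N}. pmf (vote_pmf b w n) True)"

lemma votes_eq_Pi_pmf: "votes sig b N w = Pi_pmf {1..N} False (vote_pmf b w)"
  by (simp add: votes_def vote_pmf_def[abs_def])

definition wrong_sign :: "nat \<Rightarrow> real" where
  "wrong_sign w = (if w \<in> L then 1 else -1)"

definition margin :: "(nat \<Rightarrow> nat \<Rightarrow> real) \<Rightarrow> nat \<Rightarrow> nat \<Rightarrow> real" where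
  "margin b N w = (if w \<in> L then fR sig b mu N w else fA sig b mu N w)"

definition error_prob :: "(nat \<Rightarrow> nat \<Rightarrow> real) \<Rightarrow> nat \<Rightarrow> nat \<Rightarrow> real" where
  "error_prob b N w = (if w \<in> L then lamA sig b mu N w else lamR sig b mu N w)"

lemma abs_wrong_sign [simp]: "\<bar>wrong_sign w\<bar> = 1"
  by (simp add: wrong_sign_def)

lemma margin_eq:
  assumes "1 \<le> N"
  shows "real N * margin b N w = wrong_sign w * (mu * real N - mean_numA b N w)"
proof -
  have component: "measure_pmf.expectation (votes sig b N w) (\<lambda>x. f (x n))
      = measure_pmf.expectation (vote_pmf b w n) f" if "n \<in> {1..N}" for n and f :: "bool \<Rightarrow> real"
    using that by (simp add: votes_eq_Pi_pmf expectation_Pi_pmf_component)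
  have sumA: "(\<Sum>n\<in>{1..N}. measure_pmf.expectation (votes sig b N w) (\<lambda>x. if x n then 1 else 0)) = mean_numA b N w"
    unfolding mean_numA_def
    by (intro sum.cong refl) (simp add: component[where f = "\<lambda>b. if b then 1 else 0"] expectation_bool_pmf)
  have "(\<Sum>n\<in>{1..N}. measure_pmf.expectation (votes sig b N w) (\<lambda>x. 1 - (if x n then 1 else 0)))
      = (\<Sum>n\<in>{1..N}. 1 - pmf (vote_pmf b w n) True)"
    by (intro sum.cong refl) (simp add: component[where f = "\<lambda>b. 1 - (if b then 1 else 0)"] expectation_bool_pmf)
  also have "\<dots> = real N - mean_numA b N w"
    by (simp add: mean_numA_def sum_subtractf)
  finally have sumR: "(\<Sum>n\<in>{1..N}. measure_pmf.expectation (votes sig b N w) (\<lambda>x. 1 - (if x n then 1 else 0)))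
      = real N - mean_numA b N w" .
  show ?thesis
    unfolding margin_def fA_def fR_def sumA sumR using assms by (simp add: wrong_sign_def field_simps)
qed
lemma error_prob_between:
  assumes "1 \<le> N"
  shows "measure_pmf.prob (votes sig b N w)
      {x. real N * margin b N w < wrong_sign w * (real (numA N x) - mean_numA b N w)} \<le> error_prob b N w"
    and "error_prob b N w \<le> measure_pmf.prob (votes sig b N w)
      {x. real N * margin b N w \<le> wrong_sign w * (real (numA N x) - mean_numA b N w)}"
  using margin_eq[OF assms(1), of b w]
  by (auto simp: error_prob_def lamA_def lamR_def wrong_sign_def intro!: measure_pmf.finite_measure_mono)

lemma error_prob_le_exp:
  assumes "1 \<le> N" "0 \<le> margin b N w"
  shows "error_prob b N w \<le> exp (- 2 * real N * (margin b N w)\<^sup>2)"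
proof -
  have "error_prob b N w
      \<le> measure_pmf.prob (votes sig b N w) {x. real N * margin b N w \<le> wrong_sign w * (real (numA N x) - mean_numA b N w)}"
    by (rule error_prob_between(2)[OF assms(1)])
  also have "\<dots> \<le> exp (- 2 * (real N * margin b N w)\<^sup>2 / real N)"
    unfolding votes_eq_Pi_pmf numA_def mean_numA_def
    using hoeffding_card_Pi_pmf[where I = "{1..N}" and s = "wrong_sign w" and q = "vote_pmf b w"] assms
    by simp
  also have "\<dots> = exp (- 2 * real N * (margin b N w)\<^sup>2)"
    using assms(1) by (simp add: power2_eq_square)
  finally show ?thesis .
qed

lemma error_prob_ge_1_minus_exp:
  assumes "1 \<le> N" "margin b N w \<le> 0"
  shows "1 - exp (- 2 * real N * (margin b N w)\<^sup>2) \<le> error_prob b N w"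
proof -
  define D where "D x = wrong_sign w * (real (numA N x) - mean_numA b N w)" for x
  have "measure_pmf.prob (votes sig b N w) {x. D x \<le> real N * margin b N w}
      \<le> exp (- 2 * (real N * margin b N w)\<^sup>2 / real N)"
    unfolding votes_eq_Pi_pmf numA_def mean_numA_def D_def
    using hoeffding_card_Pi_pmf[where I = "{1..N}" and s = "- wrong_sign w" and q = "vote_pmf b w"
        and a = "- (real N * margin b N w)" and dflt = False] assms mult_nonneg_nonpos[of "real N" "margin b N w"]
    by simp
  also have "\<dots> = exp (- 2 * real N * (margin b N w)\<^sup>2)"
    using assms(1) by (simp add: power2_eq_square)
  finally have "1 - exp (- 2 * real N * (margin b N w)\<^sup>2)
      \<le> measure_pmf.prob (votes sig b N w) (UNIV - {x. D x \<le> real N * margin b N w})"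
    by (simp add: measure_pmf.prob_compl[simplified])
  also have "UNIV - {x. D x \<le> real N * margin b N w} = {x. real N * margin b N w < D x}"
    by auto
  also have "measure_pmf.prob (votes sig b N w) \<dots> \<le> error_prob b N w"
    unfolding D_def by (rule error_prob_between(1)[OF assms(1)])
  finally show ?thesis .
qed

lemma error_prob_ge_anticoncentration:
  assumes "1 \<le> N" "0 \<le> k" "4 * (8 * k + 8)\<^sup>2 \<le> vote_var sig b N w"
    and "real N * margin b N w < k * sqrt (vote_var sig b N w)"
  shows "exp (- 4 * (8 * k + 8)\<^sup>2) / 4 \<le> error_prob b N w"
proof -
  have var: "vote_var sig b N w = (\<Sum>n\<in>{1..N}. pmf (vote_pmf b w n) True * (1 - pmf (vote_pmf b w n) True))"
    unfolding vote_var_def votes_eq_Pi_pmf numA_def by (rule variance_card_Pi_pmf) simp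
  have "exp (- 4 * (8 * k + 8)\<^sup>2) / 4
      \<le> measure_pmf.prob (votes sig b N w)
           {x. k * sqrt (vote_var sig b N w) \<le> wrong_sign w * (real (numA N x) - mean_numA b N w)}"
    unfolding votes_eq_Pi_pmf numA_def mean_numA_def var using assms(2,3) var
    by (intro anticoncentration_card_Pi_pmf) auto
  also have "\<dots> \<le> measure_pmf.prob (votes sig b N w)
           {x. real N * margin b N w < wrong_sign w * (real (numA N x) - mean_numA b N w)}"
    using assms(4) by (intro measure_pmf.finite_measure_mono) auto
  also have "\<dots> \<le> error_prob b N w"
    by (rule error_prob_between(1)[OF assms(1)])
  finally show ?thesis .
qed

lemma error_prob_nonneg: "0 \<le> error_prob b N w"
  by (simp add: error_prob_def lamA_def lamR_def)

lemma fidelity_eq: "fidelity prior sig b mu alphaA K N = 1 - (\<Sum>w\<in>{1..K}. pmf prior w * error_prob b N w)"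
proof -
  have lamR_eq: "lamR sig b mu N w = 1 - lamA sig b mu N w" for w
    unfolding lamA_def lamR_def
    using measure_pmf.prob_compl[simplified, of "votes sig b N w" "{x. mu * real N \<le> real (numA N x)}"]
    by (simp add: set_diff_eq)
  have "(\<Sum>w\<in>{1..K}. pmf prior w) = 1"
    using prior_support by (intro sum_pmf_eq_1) auto
  then have "1 - (\<Sum>w\<in>{1..K}. pmf prior w * error_prob b N w) = (\<Sum>w\<in>L \<union> H. pmf prior w * (1 - error_prob b N w))"
    by (simp add: L_union_H sum_subtractf algebra_simps)
  also have "\<dots> = (\<Sum>w\<in>L. pmf prior w * (1 - error_prob b N w)) + (\<Sum>w\<in>H. pmf prior w * (1 - error_prob b N w))"
    using L_inter_H by (intro sum.union_disjoint finite_L finite_H)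
  also have "\<dots> = fidelity prior sig b mu alphaA K N"
    unfolding fidelity_def using L_inter_H
    by (intro arg_cong2[where f = "(+)"] sum.cong refl) (auto simp: error_prob_def lamR_eq algebra_simps)
  finally show ?thesis ..
qed

definition prior_min :: real where
  "prior_min = Min (pmf prior ` {1..K})"

lemma prior_min_pos: "0 < prior_min"
proof -
  have "{1..K} \<noteq> {}"
    using H_nonempty by (auto simp: Hset_def)
  then show ?thesis
    unfolding prior_min_def using prior_support by (subst Min_gr_iff) (auto simp: set_pmf_eq')
qed

lemma fidelity_le_error_prob:
  assumes "w \<in> {1..K}"
  shows "fidelity prior sig b mu alphaA K N \<le> 1 - prior_min * error_prob b N w"
proof -
  have "prior_min * error_prob b N w \<le> pmf prior w * error_prob b N w"
    unfolding prior_min_def using assms by (intro mult_right_mono Min_le error_prob_nonneg) auto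
  also have "\<dots> \<le> (\<Sum>w\<in>{1..K}. pmf prior w * error_prob b N w)"
    using assms by (intro member_le_sum) (auto simp: error_prob_nonneg)
  finally show ?thesis
    by (simp add: fidelity_eq)
qed

lemma fidelity_ge_of_error_prob_le:
  assumes "\<And>w. w \<in> {1..K} \<Longrightarrow> error_prob b N w \<le> e"
  shows "1 - e \<le> fidelity prior sig b mu alphaA K N"
proof -
  have "(\<Sum>w\<in>{1..K}. pmf prior w * error_prob b N w) \<le> (\<Sum>w\<in>{1..K}. pmf prior w * e)"
    using assms by (intro sum_mono mult_left_mono) auto
  also have "\<dots> = e"
    using prior_support by (simp add: sum_pmf_eq_1 flip: sum_distrib_right)
  finally show ?thesis
    by (simp add: fidelity_eq)
qed

lemma fidelity_le_1: "fidelity prior sig b mu alphaA K N \<le> 1"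
  by (simp add: fidelity_eq sum_nonneg error_prob_nonneg)

lemma excess_le_margin:
  assumes "w \<in> {1..K}"
  shows "excess sig b mu alphaA K N \<le> margin b N w"
proof (cases "w \<in> L")
  case True
  then show ?thesis
    using finite_L by (simp add: excess_def margin_def min.coboundedI2)
next
  case False
  then have "w \<in> H"
    using assms L_union_H by auto
  with False show ?thesis
    using finite_H by (simp add: excess_def margin_def min.coboundedI1)
qed

lemma excess_attained: "\<exists>w\<in>{1..K}. margin b N w = excess sig b mu alphaA K N"
proof -
  have "Min ((\<lambda>w. fR sig b mu N w) ` L) \<in> (\<lambda>w. fR sig b mu N w) ` L"
    using finite_L L_nonempty by (intro Min_in) auto
  then obtain wL where wL: "wL \<in> L" "fR sig b mu N wL = Min ((\<lambda>w. fR sig b mu N w) ` L)"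
    by auto
  have "Min ((\<lambda>w. fA sig b mu N w) ` H) \<in> (\<lambda>w. fA sig b mu N w) ` H"
    using finite_H H_nonempty by (intro Min_in) auto
  then obtain wH where wH: "wH \<in> H" "fA sig b mu N wH = Min ((\<lambda>w. fA sig b mu N w) ` H)"
    by auto
  from wL wH show ?thesis
    using L_union_H L_inter_H unfolding excess_def margin_def min_def
    by (cases "Min ((\<lambda>w. fA sig b mu N w) ` H) \<le> Min ((\<lambda>w. fR sig b mu N w) ` L)") force+
qed

lemma fidelity_ge_of_scaled_excess:
  assumes "1 \<le> N" "0 \<le> t" "t \<le> sqrt (real N) * excess sig b mu alphaA K N"
  shows "1 - exp (- 2 * t\<^sup>2) \<le> fidelity prior sig b mu alphaA K N"
proof (rule fidelity_ge_of_error_prob_le)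
  fix w
  assume "w \<in> {1..K}"
  have "0 < sqrt (real N)"
    using assms(1) by simp
  have "sqrt (real N) * excess sig b mu alphaA K N \<le> sqrt (real N) * margin b N w"
    using excess_le_margin[OF \<open>w \<in> {1..K}\<close>] by (rule mult_left_mono) simp
  then have t_le: "t \<le> sqrt (real N) * margin b N w"
    using assms(3) by linarith
  then have "0 \<le> sqrt (real N) * margin b N w"
    using assms(2) by linarith
  then have "0 \<le> margin b N w"
    using \<open>0 < sqrt (real N)\<close> by (simp add: zero_le_mult_iff)
  have "t\<^sup>2 \<le> real N * (margin b N w)\<^sup>2"
    using power_mono[OF t_le assms(2), of 2] by (simp add: power_mult_distrib)
  then have "exp (- 2 * real N * (margin b N w)\<^sup>2) \<le> exp (- 2 * t\<^sup>2)"
    by simp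
  then show "error_prob b N w \<le> exp (- 2 * t\<^sup>2)"
    using error_prob_le_exp[OF assms(1) \<open>0 \<le> margin b N w\<close>] by linarith
qed

lemma fidelity_tendsto_1:
  fixes beta :: "nat \<Rightarrow> nat \<Rightarrow> nat \<Rightarrow> real"
  assumes "liminf (\<lambda>N. ereal (sqrt (real N) * excess sig (beta N) mu alphaA K N)) = \<infinity>"
  shows "(\<lambda>N. fidelity prior sig (beta N) mu alphaA K N) \<longlonglongrightarrow> 1"
proof -
  define t where "t N = sqrt (real N) * excess sig (beta N) mu alphaA K N" for N
  have "\<forall>r. eventually (\<lambda>N. r < t N) sequentially"
    using assms Liminf_PInfty[of sequentially "\<lambda>N. ereal (t N)"] by (simp add: t_def tendsto_PInfty)
  then have "filterlim t at_top sequentially"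
    by (simp add: filterlim_at_top_dense)
  then have "filterlim (\<lambda>N. 2 * (t N)\<^sup>2) at_top sequentially"
    by (intro filterlim_tendsto_pos_mult_at_top[OF tendsto_const] filterlim_pow_at_top) auto
  then have "filterlim (\<lambda>N. - 2 * (t N)\<^sup>2) at_bot sequentially"
    by (subst filterlim_uminus_at_bot) simp
  then have "(\<lambda>N. 1 - exp (- 2 * (t N)\<^sup>2)) \<longlonglongrightarrow> 1 - 0"
    by (intro tendsto_diff tendsto_const filterlim_compose[OF exp_at_bot])
  then have lower_limit: "(\<lambda>N. 1 - exp (- 2 * (t N)\<^sup>2)) \<longlonglongrightarrow> 1"
    by simp
  have lower: "eventually (\<lambda>N. 1 - exp (- 2 * (t N)\<^sup>2) \<le> fidelity prior sig (beta N) mu alphaA K N) sequentially"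
  proof (rule eventually_mono[OF eventually_conj[OF \<open>\<forall>r. _\<close>[rule_format, of 0] eventually_ge_at_top[of 1]]])
    fix N :: nat
    assume "0 < t N \<and> 1 \<le> N"
    then show "1 - exp (- 2 * (t N)\<^sup>2) \<le> fidelity prior sig (beta N) mu alphaA K N"
      unfolding t_def by (intro fidelity_ge_of_scaled_excess) auto
  qed
  have upper: "eventually (\<lambda>N. fidelity prior sig (beta N) mu alphaA K N \<le> 1) sequentially"
    by (simp add: fidelity_le_1)
  show ?thesis
    using tendsto_sandwich[OF lower upper lower_limit tendsto_const] by simp
qed

lemma fidelity_le_of_negative_excess:
  assumes "1 \<le> N" "eta \<le> 0" "sqrt (real N) * excess sig b mu alphaA K N \<le> eta"
  shows "fidelity prior sig b mu alphaA K N \<le> 1 - prior_min * (1 - exp (- 2 * eta\<^sup>2))"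
proof -
  obtain w where w: "w \<in> {1..K}" "margin b N w = excess sig b mu alphaA K N"
    using excess_attained by blast
  have "0 < sqrt (real N)"
    using assms(1) by simp
  moreover have "sqrt (real N) * margin b N w \<le> 0"
    using assms(2,3) w(2) by simp
  ultimately have "margin b N w \<le> 0"
    by (simp add: mult_le_0_iff)
  have "eta\<^sup>2 \<le> (sqrt (real N) * margin b N w)\<^sup>2"
    using power_mono[of "- eta" "- (sqrt (real N) * margin b N w)" 2] assms(2,3) w(2) by simp
  then have "1 - exp (- 2 * eta\<^sup>2) \<le> 1 - exp (- 2 * real N * (margin b N w)\<^sup>2)"
    by (simp add: power_mult_distrib)
  also have "\<dots> \<le> error_prob b N w"
    by (rule error_prob_ge_1_minus_exp[OF assms(1) \<open>margin b N w \<le> 0\<close>])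
  finally have "prior_min * (1 - exp (- 2 * eta\<^sup>2)) \<le> prior_min * error_prob b N w"
    using prior_min_pos by (intro mult_left_mono) auto
  then show ?thesis
    using fidelity_le_error_prob[OF w(1), of b N] by linarith
qed

lemma fidelity_le_of_large_variance:
  assumes "1 \<le> N" "0 \<le> k" "sqrt (real N) * excess sig b mu alphaA K N < k * sqrt psi"
    and variance: "\<And>w. w \<in> {1..K} \<Longrightarrow> psi * real N \<le> vote_var sig b N w"
    and "4 * (8 * k + 8)\<^sup>2 \<le> psi * real N"
  shows "fidelity prior sig b mu alphaA K N \<le> 1 - prior_min * (exp (- 4 * (8 * k + 8)\<^sup>2) / 4)"
proof -
  obtain w where w: "w \<in> {1..K}" "margin b N w = excess sig b mu alphaA K N"
    using excess_attained by blast
  have "0 < sqrt (real N)"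
    using assms(1) by simp
  have "real N * margin b N w = sqrt (real N) * (sqrt (real N) * margin b N w)"
    by (simp flip: mult.assoc)
  also have "\<dots> < sqrt (real N) * (k * sqrt psi)"
    using assms(3) w(2) \<open>0 < sqrt (real N)\<close> by simp
  also have "\<dots> = k * sqrt (psi * real N)"
    by (simp add: real_sqrt_mult)
  also have "\<dots> \<le> k * sqrt (vote_var sig b N w)"
    using assms(2) variance[OF w(1)] by (intro mult_left_mono) auto
  finally have "exp (- 4 * (8 * k + 8)\<^sup>2) / 4 \<le> error_prob b N w"
    using assms(1,2,5) variance[OF w(1)] by (intro error_prob_ge_anticoncentration) auto
  then have "prior_min * (exp (- 4 * (8 * k + 8)\<^sup>2) / 4) \<le> prior_min * error_prob b N w"
    using prior_min_pos by (intro mult_left_mono) auto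
  then show ?thesis
    using fidelity_le_error_prob[OF w(1), of b N] by linarith
qed

lemma fidelity_bounded_away_of_negative_excess:
  fixes beta :: "nat \<Rightarrow> nat \<Rightarrow> nat \<Rightarrow> real"
  assumes "eta < 0" "\<forall>N\<in>NN. sqrt (real N) * excess sig (beta N) mu alphaA K N \<le> eta"
  shows "\<exists>Neta>0. \<exists>c>0. \<forall>N\<in>NN. Neta < real N \<longrightarrow> fidelity prior sig (beta N) mu alphaA K N \<le> 1 - c"
  using assms prior_min_pos
  by (intro exI[of _ 1] exI[of _ "prior_min * (1 - exp (- 2 * eta\<^sup>2))"] conjI ballI impI
      fidelity_le_of_negative_excess) auto

lemma fidelity_bounded_away_of_large_variance:
  fixes beta :: "nat \<Rightarrow> nat \<Rightarrow> nat \<Rightarrow> real"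
  assumes "0 \<le> eta" "\<forall>N\<in>NN. sqrt (real N) * excess sig (beta N) mu alphaA K N \<le> eta" "0 < psi"
    and variance: "\<forall>N\<in>NN. \<forall>w\<in>{1..K}. psi * real N \<le> vote_var sig (beta N) N w"
  shows "\<exists>Neta>0. \<exists>c>0. \<forall>N\<in>NN. Neta < real N \<longrightarrow> fidelity prior sig (beta N) mu alphaA K N \<le> 1 - c"
proof -
  define k where "k = eta / sqrt psi + 1"
  have "0 \<le> k" "eta < k * sqrt psi"
    using assms(1,3) by (simp_all add: k_def distrib_right)
  show ?thesis
  proof (intro exI conjI ballI impI)
    show "0 < 4 * (8 * k + 8)\<^sup>2 / psi + 1"
      using \<open>0 < psi\<close> by (intro add_nonneg_pos divide_nonneg_pos) auto
    show "0 < prior_min * (exp (- 4 * (8 * k + 8)\<^sup>2) / 4)"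
      using prior_min_pos by simp
    fix N
    assume N: "N \<in> NN" "4 * (8 * k + 8)\<^sup>2 / psi + 1 < real N"
    have "0 \<le> 4 * (8 * k + 8)\<^sup>2 / psi"
      using \<open>0 < psi\<close> by simp
    then have "1 \<le> N" "4 * (8 * k + 8)\<^sup>2 / psi \<le> real N"
      using N(2) by linarith+
    then have "1 \<le> N" "4 * (8 * k + 8)\<^sup>2 \<le> psi * real N"
      using \<open>0 < psi\<close> by (simp_all add: pos_divide_le_eq mult.commute)
    then show "fidelity prior sig (beta N) mu alphaA K N \<le> 1 - prior_min * (exp (- 4 * (8 * k + 8)\<^sup>2) / 4)"
      using assms(2) variance N(1) \<open>0 \<le> k\<close> \<open>eta < k * sqrt psi\<close>
      by (intro fidelity_le_of_large_variance[where psi = psi]) force+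
  qed
qed

end

theorem theorem7:
  fixes K M B :: nat
    and mu :: real
    and prior :: "nat pmf"
    and sig :: "nat \<Rightarrow> nat pmf"
    and alphaA :: "nat \<Rightarrow> real"
    and v :: "nat \<Rightarrow> nat \<Rightarrow> nat \<Rightarrow> bool \<Rightarrow> nat"
    and beta :: "nat \<Rightarrow> nat \<Rightarrow> nat \<Rightarrow> real"
  assumes mu: "0 < mu" "mu < 1"
    and prior: "set_pmf prior = {1..K}"
    and sig: "\<forall>w\<in>{1..K}. set_pmf (sig w) \<subseteq> {1..M}"
    and sd: "stoch_dom K sig"
    and alpha_ne: "\<forall>w\<in>{1..K}. alphaA w \<noteq> mu"
    and L_ne: "Lset K alphaA mu \<noteq> {}"
    and H_ne: "Hset K alphaA mu \<noteq> {}"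
    and v_bound: "\<forall>N\<ge>1. \<forall>n\<in>{1..N}. \<forall>w\<in>{1..K}. \<forall>r. v N n w r \<le> B"
    and v_A_inc: "\<forall>N\<ge>1. \<forall>n\<in>{1..N}. \<forall>w\<in>{1..K}. \<forall>w'\<in>{1..K}. w < w' \<longrightarrow> v N n w True < v N n w' True"
    and v_R_dec: "\<forall>N\<ge>1. \<forall>n\<in>{1..N}. \<forall>w\<in>{1..K}. \<forall>w'\<in>{1..K}. w < w' \<longrightarrow> v N n w False > v N n w' False"
    and pref_count: "\<forall>N\<ge>1. \<forall>w\<in>{1..K}.
        int (card {n\<in>{1..N}. v N n w False > v N n w True}) = \<lfloor>(1 - alphaA w) * real N\<rfloor>"
    and beta: "\<forall>N\<ge>1. \<forall>n\<in>{1..N}. \<forall>m\<in>{1..M}. 0 \<le> beta N n m \<and> beta N n m \<le> 1"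
  shows
    "(liminf (\<lambda>N. ereal (sqrt (real N) * excess sig (beta N) mu alphaA K N)) = \<infinity>
        \<longrightarrow> (\<lambda>N. fidelity prior sig (beta N) mu alphaA K N) \<longlonglongrightarrow> 1)
   \<and> (\<forall>(eta::real) (NN::nat set). eta < 0 \<and> infinite NN \<and>
        (\<forall>N\<in>NN. sqrt (real N) * excess sig (beta N) mu alphaA K N \<le> eta)
        \<longrightarrow> (\<exists>Neta::real. Neta > 0 \<and> (\<exists>c::real. c > 0 \<and>
              (\<forall>N\<in>NN. real N > Neta \<longrightarrow> fidelity prior sig (beta N) mu alphaA K N \<le> 1 - c))))
   \<and> (\<forall>(eta::real) (NN::nat set) (psi::real). eta \<ge> 0 \<and> infinite NN \<and>
        (\<forall>N\<in>NN. sqrt (real N) * excess sig (beta N) mu alphaA K N \<le> eta) \<and>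
        psi > 0 \<and> (\<forall>N\<in>NN. \<forall>w\<in>{1..K}. vote_var sig (beta N) N w \<ge> psi * real N)
        \<longrightarrow> (\<exists>Neta::real. Neta > 0 \<and> (\<exists>c::real. c > 0 \<and>
              (\<forall>N\<in>NN. real N > Neta \<longrightarrow> fidelity prior sig (beta N) mu alphaA K N \<le> 1 - c))))"
proof -
  interpret voting_game K mu prior sig alphaA
    using prior alpha_ne L_ne H_ne by unfold_locales
  show ?thesis
    using fidelity_tendsto_1[where beta = beta] fidelity_bounded_away_of_negative_excess[where beta = beta]
      fidelity_bounded_away_of_large_variance[where beta = beta]
    by blast
qed

end
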